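(* HazardErasPOP, as described in the context, is safe from use-after-free errors: no node freed by a reclaiming thread is subsequently accessed by any thread.
   Context: Setting: an asynchronous shared-memory system with a fixed set of threads operating on a linked concurrent data structure; each unlinked node is retired by exactly one thread. HazardErasPOP: there is a shared monotonically increasing global epoch. Each node records a birth epoch (global epoch at allocation) and a retire epoch (global epoch when retired). Each thread has private local reservation slots holding epochs (value NONE when empty), a row of a shared array of reservation slots, a shared counter publishCounter, and a private retire list. To read a node pointer from an atomic location into a slot, a thread repeatedly loads the pointer and then the global epoch; if the loaded epoch equals the epoch held in its local slot it returns the pointer, otherwise it writes the new epoch into its local slot (no fence, not published) and retries. At the end of an operation local slots are set to NONE. On retire a thread sets the node's retire epoch, appends it to its retire list, and when the list reaches a threshold it increments the global epoch, records all threads' publishCounter values, sends a POSIX signal to every other thread (whose handler copies its local reserved epochs into its shared slots and increments its publishCounter), waits until every other thread's publishCounter has increased, collects all published epochs, and frees each retired node for which every published epoch $e$ is NONE, or $e <$ the node's birth epoch, or $e >$ the node's retire epoch. Assumption: after being signalled, a thread publishes its reservations within bounded time. *)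

theory Defs
  imports Main
begin

text \<open>
  Threads are the elements of a finite
  type 't, local/shared reservation slot indices are the elements of a finite
  type 'k, node identifiers are elements of type 'n.  Epoch reservations are
  of type nat option, where None plays the role of NONE.
  The linked data structure is abstracted: a pointer load from an atomic
  location (a root, or a field of a node the thread currently holds a
  protected reference to) returns null or a node that is currently in the
  data structure, i.e. allocated and not yet retired (a node is retired only
  after it has been unlinked).  A ghost flag uaf records whether any thread
  has ever accessed a freed node.
\<close>

datatype nstat = Unalloc | Alive | Retired | Freed

datatype ('t, 'n, 'k) pcs =
    Idle
  | InOp
  | RdPtr 'k                     \<comment> \<open>protected read into slot k: about to load the pointer\<close>
  | RdEp 'k "'n option"          \<comment> \<open>pointer loaded, about to load the global epoch\<close>
  | RecInc                       \<comment> \<open>reclamation: increment global epoch\<close>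
  | RecRecord                    \<comment> \<open>reclamation: record all publishCounters\<close>
  | RecSignal "'t set"           \<comment> \<open>reclamation: threads still to be signalled\<close>
  | RecWait                      \<comment> \<open>reclamation: wait for publication, then collect epochs\<close>
  | RecFree "nat set"            \<comment> \<open>reclamation: free using the collected epochs\<close>

record ('t, 'n, 'k) hstate =
  ge    :: nat                        \<comment> \<open>global epoch\<close>
  nst   :: "'n \<Rightarrow> nstat"
  birth :: "'n \<Rightarrow> nat"
  rete  :: "'n \<Rightarrow> nat"
  pc    :: "'t \<Rightarrow> ('t, 'n, 'k) pcs"
  loc   :: "'t \<Rightarrow> 'k \<Rightarrow> nat option"  \<comment> \<open>private local reservation slots\<close>
  shr   :: "'t \<Rightarrow> 'k \<Rightarrow> nat option"  \<comment> \<open>shared (published) reservation slots\<close>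
  cnt   :: "'t \<Rightarrow> nat"               \<comment> \<open>publishCounter\<close>
  pend  :: "'t \<Rightarrow> bool"              \<comment> \<open>pending (coalesced) POSIX signal\<close>
  snap  :: "'t \<Rightarrow> 't \<Rightarrow> nat"         \<comment> \<open>publishCounter values recorded by a reclaimer\<close>
  rlist :: "'t \<Rightarrow> 'n list"
  ref   :: "'t \<Rightarrow> 'k \<Rightarrow> 'n option"   \<comment> \<open>pointer obtained by the protected read into slot k\<close>
  uaf   :: bool

definition hinit :: "('t, 'n, 'k) hstate" where
  "hinit = \<lparr> ge = 0, nst = (\<lambda>_. Unalloc), birth = (\<lambda>_. 0), rete = (\<lambda>_. 0),
             pc = (\<lambda>_. Idle), loc = (\<lambda>_ _. None), shr = (\<lambda>_ _. None),
             cnt = (\<lambda>_. 0), pend = (\<lambda>_. False), snap = (\<lambda>_ _. 0),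
             rlist = (\<lambda>_. []), ref = (\<lambda>_ _. None), uaf = False \<rparr>"

definition setpc :: "'t \<Rightarrow> ('t, 'n, 'k) pcs \<Rightarrow> ('t, 'n, 'k) hstate \<Rightarrow> ('t, 'n, 'k) hstate" where
  "setpc t c s = s\<lparr>pc := (pc s)(t := c)\<rparr>"

definition freeable :: "nat set \<Rightarrow> ('t, 'n, 'k) hstate \<Rightarrow> 'n \<Rightarrow> bool" where
  "freeable E s n = (\<forall>e\<in>E. e < birth s n \<or> rete s n < e)"

definition collected :: "'t \<Rightarrow> ('t, 'n, 'k) hstate \<Rightarrow> nat set" where
  "collected t s = {e. \<exists>u k. shr s u k = Some e} \<union> {e. \<exists>k. loc s t k = Some e}"

text \<open>One atomic step of the system; R is the retire-list threshold.\<close>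
inductive hstep :: "nat \<Rightarrow> ('t::finite, 'n, 'k::finite) hstate \<Rightarrow> ('t, 'n, 'k) hstate \<Rightarrow> bool"
  for R :: nat where
  begin_op:
    "pc s t = Idle \<Longrightarrow> hstep R s (setpc t InOp s)"
| alloc:
    "pc s t = InOp \<Longrightarrow> nst s n = Unalloc \<Longrightarrow>
     hstep R s (s\<lparr>nst := (nst s)(n := Alive), birth := (birth s)(n := ge s)\<rparr>)"
| start_read:
    "pc s t = InOp \<Longrightarrow>
     hstep R s (setpc t (RdPtr i) (s\<lparr>ref := (ref s)(t := (ref s t)(i := None))\<rparr>))"
| load_ptr_root:
    "pc s t = RdPtr i \<Longrightarrow> (p = None \<or> (\<exists>n. p = Some n \<and> nst s n = Alive)) \<Longrightarrow>
     hstep R s (setpc t (RdEp i p) s)"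
| load_ptr_node:
    "pc s t = RdPtr i \<Longrightarrow> ref s t j = Some m \<Longrightarrow>
     (p = None \<or> (\<exists>n. p = Some n \<and> nst s n = Alive)) \<Longrightarrow>
     hstep R s (setpc t (RdEp i p) (s\<lparr>uaf := (uaf s \<or> nst s m = Freed)\<rparr>))"
| load_epoch_ok:
    "pc s t = RdEp i p \<Longrightarrow> loc s t i = Some (ge s) \<Longrightarrow>
     hstep R s (setpc t InOp (s\<lparr>ref := (ref s)(t := (ref s t)(i := p))\<rparr>))"
| load_epoch_retry:
    "pc s t = RdEp i p \<Longrightarrow> loc s t i \<noteq> Some (ge s) \<Longrightarrow>
     hstep R s (setpc t (RdPtr i) (s\<lparr>loc := (loc s)(t := (loc s t)(i := Some (ge s)))\<rparr>))"
| access: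
    "pc s t = InOp \<Longrightarrow> ref s t i = Some n \<Longrightarrow>
     hstep R s (s\<lparr>uaf := (uaf s \<or> nst s n = Freed)\<rparr>)"
| retire:
    "pc s t = InOp \<Longrightarrow> nst s n = Alive \<Longrightarrow>
     hstep R s (setpc t (if R \<le> Suc (length (rlist s t)) then RecInc else InOp)
       (s\<lparr>nst := (nst s)(n := Retired), rete := (rete s)(n := ge s),
          rlist := (rlist s)(t := n # rlist s t)\<rparr>))"
| end_op:
    "pc s t = InOp \<Longrightarrow>
     hstep R s (setpc t Idle (s\<lparr>loc := (loc s)(t := (\<lambda>_. None)), ref := (ref s)(t := (\<lambda>_. None))\<rparr>))"
| rec_inc:
    "pc s t = RecInc \<Longrightarrow> hstep R s (setpc t RecRecord (s\<lparr>ge := Suc (ge s)\<rparr>))"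
| rec_record:
    "pc s t = RecRecord \<Longrightarrow>
     hstep R s (setpc t (RecSignal (UNIV - {t})) (s\<lparr>snap := (snap s)(t := cnt s)\<rparr>))"
| rec_signal:
    "pc s t = RecSignal U \<Longrightarrow> u \<in> U \<Longrightarrow>
     hstep R s (setpc t (RecSignal (U - {u})) (s\<lparr>pend := (pend s)(u := True)\<rparr>))"
| rec_signal_done:
    "pc s t = RecSignal {} \<Longrightarrow> hstep R s (setpc t RecWait s)"
| rec_wait:
    "pc s t = RecWait \<Longrightarrow> (\<forall>u. u \<noteq> t \<longrightarrow> snap s t u < cnt s u) \<Longrightarrow>
     hstep R s (setpc t (RecFree (collected t s)) s)"
| rec_free:
    "pc s t = RecFree E \<Longrightarrow>
     hstep R s (setpc t InOp (s\<lparr>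
        nst := (\<lambda>n. if n \<in> set (rlist s t) \<and> freeable E s n then Freed else nst s n),
        rlist := (rlist s)(t := filter (\<lambda>n. \<not> freeable E s n) (rlist s t))\<rparr>))"
| handler:
    "pend s u \<Longrightarrow>
     hstep R s (s\<lparr>shr := (shr s)(u := loc s u), cnt := (cnt s)(u := Suc (cnt s u)),
                   pend := (pend s)(u := False)\<rparr>)"

definition reachable :: "nat \<Rightarrow> ('t::finite, 'n, 'k::finite) hstate \<Rightarrow> bool" where
  "reachable R s = (hstep R)\<^sup>*\<^sup>* hinit s"

end

theory Submission
  imports Defs
begin

(* A thread dereferences a node only through a slot whose local reservation e satisfies
   birth <= e, and e <= retire epoch once the node is retired: the pointer is accepted only
   when e equals the current global epoch, at which moment the node was live.  A reclaimer
   first increments the global epoch, so every reservation written afterwards exceeds the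
   retire epochs of all nodes in its list; every older reservation of another thread is
   copied to the shared array by the signal handler whose publishCounter increment the
   reclaimer waits for.  Hence each reservation is either collected or postdates all
   retirements in the list, and in both cases the free condition spares the nodes it
   protects. *)

fun read_slot :: "('t, 'n, 'k) pcs \<Rightarrow> 'k option" where
  "read_slot (RdPtr i) = Some i"
| "read_slot (RdEp i p) = Some i"
| "read_slot _ = None"

fun epoch_advanced :: "('t, 'n, 'k) pcs \<Rightarrow> bool" where
  "epoch_advanced RecRecord = True"
| "epoch_advanced (RecSignal U) = True"
| "epoch_advanced RecWait = True"
| "epoch_advanced (RecFree E) = True"
| "epoch_advanced _ = False"

fun signalling :: "('t, 'n, 'k) pcs \<Rightarrow> bool" where
  "signalling (RecSignal U) = True"
| "signalling RecWait = True"
| "signalling _ = False"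

lemma signalling_epoch_advanced: "signalling c \<Longrightarrow> epoch_advanced c"
  by (cases c) auto

definition protects :: "nat \<Rightarrow> ('t, 'n, 'k) hstate \<Rightarrow> 'n \<Rightarrow> bool" where
  "protects e s n \<longleftrightarrow> birth s n \<le> e \<and> (nst s n = Alive \<or> nst s n = Retired \<and> e \<le> rete s n)"

lemma protects_not_Freed: "protects e s n \<Longrightarrow> nst s n \<noteq> Freed"
  by (auto simp: protects_def)

lemma freeable_protected_Alive:
  "freeable E s n \<Longrightarrow> e \<in> E \<Longrightarrow> protects e s n \<Longrightarrow> nst s n = Alive"
  by (fastforce simp: freeable_def protects_def)

definition epochs_le_global :: "('t, 'n, 'k) hstate \<Rightarrow> bool" where
  "epochs_le_global s \<longleftrightarrow>
     (\<forall>n. birth s n \<le> ge s \<and> rete s n \<le> ge s) \<and> (\<forall>t i e. loc s t i = Some e \<longrightarrow> e \<le> ge s)"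

definition retire_lists_retired :: "('t, 'n, 'k) hstate \<Rightarrow> bool" where
  "retire_lists_retired s \<longleftrightarrow> (\<forall>t. \<forall>n \<in> set (rlist s t). nst s n = Retired)"

definition retire_lists_disjoint :: "('t, 'n, 'k) hstate \<Rightarrow> bool" where
  "retire_lists_disjoint s \<longleftrightarrow> (\<forall>t u. t \<noteq> u \<longrightarrow> set (rlist s t) \<inter> set (rlist s u) = {})"

definition read_slots_clear :: "('t, 'n, 'k) hstate \<Rightarrow> bool" where
  "read_slots_clear s \<longleftrightarrow> (\<forall>t i. read_slot (pc s t) = Some i \<longrightarrow> ref s t i = None)"

definition refs_protected :: "('t, 'n, 'k) hstate \<Rightarrow> bool" where
  "refs_protected s \<longleftrightarrow>
     (\<forall>t i n. ref s t i = Some n \<longrightarrow> (\<exists>e. loc s t i = Some e \<and> protects e s n))"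

definition loaded_ptr_protected :: "('t, 'n, 'k) hstate \<Rightarrow> bool" where
  "loaded_ptr_protected s \<longleftrightarrow>
     (\<forall>t i n. pc s t = RdEp i (Some n) \<longrightarrow> loc s t i = Some (ge s) \<longrightarrow> protects (ge s) s n)"

definition reclaimer_lists_expired :: "('t, 'n, 'k) hstate \<Rightarrow> bool" where
  "reclaimer_lists_expired s \<longleftrightarrow>
     (\<forall>r. \<forall>n \<in> set (rlist s r). epoch_advanced (pc s r) \<longrightarrow> rete s n < ge s)"

(* snap s r t < cnt s t: the signal handler of t has run since r recorded the counters. *)
definition reservations_published :: "('t, 'n, 'k) hstate \<Rightarrow> bool" where
  "reservations_published s \<longleftrightarrow>
     (\<forall>r t i e. signalling (pc s r) \<longrightarrow> t \<noteq> r \<longrightarrow> snap s r t < cnt s t \<longrightarrow>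
        loc s t i = Some e \<longrightarrow> shr s t i = Some e \<or> (\<forall>n \<in> set (rlist s r). rete s n < e))"

definition reservations_collected :: "('t, 'n, 'k) hstate \<Rightarrow> bool" where
  "reservations_collected s \<longleftrightarrow>
     (\<forall>r E t i e. pc s r = RecFree E \<longrightarrow> loc s t i = Some e \<longrightarrow>
        e \<in> E \<or> (\<forall>n \<in> set (rlist s r). rete s n < e))"

lemma epochs_le_global_step:
  assumes "hstep R s s'" "epochs_le_global s"
  shows "epochs_le_global s'"
  using assms by cases (auto simp: epochs_le_global_def setpc_def le_Suc_eq)

lemma retire_lists_retired_step:
  assumes "hstep R s s'" "retire_lists_retired s" "retire_lists_disjoint s"
  shows "retire_lists_retired s'"
  using assms by cases (force simp: retire_lists_retired_def retire_lists_disjoint_def setpc_def)+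

lemma retire_lists_disjoint_step:
  assumes "hstep R s s'" "retire_lists_retired s" "retire_lists_disjoint s"
  shows "retire_lists_disjoint s'"
  using assms
  by cases (fastforce simp: retire_lists_retired_def retire_lists_disjoint_def setpc_def)+

lemma read_slots_clear_step:
  assumes "hstep R s s'" "read_slots_clear s"
  shows "read_slots_clear s'"
  using assms by cases (auto simp: read_slots_clear_def setpc_def)

lemma reclaimer_lists_expiredD:
  "reclaimer_lists_expired s \<Longrightarrow> n \<in> set (rlist s r) \<Longrightarrow> epoch_advanced (pc s r) \<Longrightarrow>
   rete s n < ge s"
  by (auto simp: reclaimer_lists_expired_def)

lemma reclaimer_lists_expired_step:
  assumes "hstep R s s'" and expired: "reclaimer_lists_expired s"
    and epochs: "epochs_le_global s" and retired: "retire_lists_retired s"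
  shows "reclaimer_lists_expired s'"
  using assms(1)
proof cases
  case (rec_inc t)
  then show ?thesis
    using expired epochs
    by (auto simp: reclaimer_lists_expired_def epochs_le_global_def setpc_def less_Suc_eq_le)
qed (use reclaimer_lists_expiredD[OF expired] retired in
      \<open>auto simp: reclaimer_lists_expired_def retire_lists_retired_def setpc_def\<close>)

lemma loaded_ptr_protected_step:
  assumes "hstep R s s'" and loaded: "loaded_ptr_protected s" and epochs: "epochs_le_global s"
    and retired: "retire_lists_retired s" and expired: "reclaimer_lists_expired s"
  shows "loaded_ptr_protected s'"
  using assms(1)
proof cases
  case (rec_inc t)
  then show ?thesis
    using epochs by (fastforce simp: loaded_ptr_protected_def epochs_le_global_def setpc_def)
next
  case (rec_free t E)
  have "n \<notin> set (rlist s t)" if "protects (ge s) s n" for n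
    using that reclaimer_lists_expiredD[OF expired, of _ t] rec_free retired
    by (fastforce simp: protects_def retire_lists_retired_def)
  then show ?thesis
    using loaded rec_free by (fastforce simp: loaded_ptr_protected_def protects_def setpc_def)
qed (use loaded epochs in
      \<open>auto simp: loaded_ptr_protected_def epochs_le_global_def protects_def setpc_def\<close>)

lemma protected_not_freeable:
  assumes "reservations_collected s" "retire_lists_retired s"
    and "pc s r = RecFree E" "loc s t i = Some e" "protects e s n" "n \<in> set (rlist s r)"
  shows "\<not> freeable E s n"
  using assms freeable_protected_Alive[of E s n e]
  by (fastforce simp: reservations_collected_def retire_lists_retired_def protects_def)

lemma refs_protected_step:
  assumes "hstep R s s'" and refs: "refs_protected s" and loaded: "loaded_ptr_protected s"
    and clear: "read_slots_clear s" and epochs: "epochs_le_global s"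
    and retired: "retire_lists_retired s" and collected: "reservations_collected s"
  shows "refs_protected s'"
  using assms(1)
proof cases
  case (alloc t n)
  then show ?thesis
    using refs by (fastforce simp: refs_protected_def protects_def)
next
  case (load_epoch_ok t i p)
  then show ?thesis
    using refs loaded
    by (fastforce simp: refs_protected_def loaded_ptr_protected_def protects_def setpc_def)
next
  case (retire t n)
  then show ?thesis
    using refs epochs
    by (fastforce simp: refs_protected_def epochs_le_global_def protects_def setpc_def)
next
  case (rec_free t E)
  then show ?thesis
    using refs protected_not_freeable[OF collected retired \<open>pc s t = RecFree E\<close>]
    by (fastforce simp: refs_protected_def protects_def setpc_def)
qed (use refs clear in \<open>auto simp: refs_protected_def read_slots_clear_def protects_def setpc_def\<close>)

lemma reservations_published_step:
  assumes "hstep R s s'" and published: "reservations_published s"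
    and expired: "reclaimer_lists_expired s" and retired: "retire_lists_retired s"
  shows "reservations_published s'"
  using assms(1)
proof cases
  case (load_epoch_retry t i p)
  then show ?thesis
    using published
    by (auto simp: reservations_published_def setpc_def
        intro: reclaimer_lists_expiredD[OF expired] signalling_epoch_advanced)
next
  case (retire t n)
  then show ?thesis
    using published retired
    by (fastforce simp: reservations_published_def retire_lists_retired_def setpc_def)
qed (use published in \<open>auto simp: reservations_published_def setpc_def\<close>)

lemma reservation_collected_after_wait:
  assumes published: "reservations_published s" and "pc s t = RecWait"
    and counters: "\<forall>u. u \<noteq> t \<longrightarrow> snap s t u < cnt s u" and reserved: "loc s u i = Some e"
  shows "e \<in> collected t s \<or> (\<forall>n \<in> set (rlist s t). rete s n < e)"
proof (cases "u = t")
  case True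
  then show ?thesis using reserved by (auto simp: collected_def)
next
  case False
  then have "shr s u i = Some e \<or> (\<forall>n \<in> set (rlist s t). rete s n < e)"
    using published \<open>pc s t = RecWait\<close> counters reserved by (simp add: reservations_published_def)
  then show ?thesis by (auto simp: collected_def)
qed

lemma reservations_collected_step:
  assumes "hstep R s s'" and collected: "reservations_collected s"
    and published: "reservations_published s" and expired: "reclaimer_lists_expired s"
    and retired: "retire_lists_retired s"
  shows "reservations_collected s'"
  using assms(1)
proof cases
  case (load_epoch_retry t i p)
  then show ?thesis
    using collected reclaimer_lists_expiredD[OF expired]
    by (auto simp: reservations_collected_def setpc_def)
next
  case (retire t n)
  then show ?thesis
    using collected retired
    by (fastforce simp: reservations_collected_def retire_lists_retired_def setpc_def)
next
  case (rec_wait t)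
  then show ?thesis
    using collected reservation_collected_after_wait[OF published]
    by (auto simp: reservations_collected_def setpc_def)
qed (use collected in \<open>auto simp: reservations_collected_def setpc_def\<close>)

definition reclamation_invariant :: "('t, 'n, 'k) hstate \<Rightarrow> bool" where
  "reclamation_invariant s \<longleftrightarrow>
     epochs_le_global s \<and> retire_lists_retired s \<and> retire_lists_disjoint s \<and> read_slots_clear s \<and>
     refs_protected s \<and> loaded_ptr_protected s \<and> reclaimer_lists_expired s \<and>
     reservations_published s \<and> reservations_collected s"

lemma reclamation_invariant_init: "reclamation_invariant hinit"
  by (simp add: reclamation_invariant_def hinit_def epochs_le_global_def retire_lists_retired_def
      retire_lists_disjoint_def read_slots_clear_def refs_protected_def loaded_ptr_protected_def
      reclaimer_lists_expired_def reservations_published_def reservations_collected_def)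

lemma reclamation_invariant_step:
  "hstep R s s' \<Longrightarrow> reclamation_invariant s \<Longrightarrow> reclamation_invariant s'"
  unfolding reclamation_invariant_def
  by (meson epochs_le_global_step retire_lists_retired_step retire_lists_disjoint_step
      read_slots_clear_step refs_protected_step loaded_ptr_protected_step
      reclaimer_lists_expired_step reservations_published_step reservations_collected_step)

lemma uaf_step:
  assumes "hstep R s s'" and refs: "refs_protected s"
  shows "uaf s' \<longleftrightarrow> uaf s"
  using assms(1)
proof cases
  case (load_ptr_node t i j m p)
  then show ?thesis
    using refs protects_not_Freed by (fastforce simp: refs_protected_def setpc_def)
next
  case (access t i n)
  then show ?thesis
    using refs protects_not_Freed by (fastforce simp: refs_protected_def)
qed (simp_all add: setpc_def)

theorem mainTheorem9:
  fixes R :: nat and s :: "('t::finite, 'n, 'k::finite) hstate"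
  assumes "reachable R s"
  shows "\<not> uaf s"
proof -
  from assms have "(hstep R)\<^sup>*\<^sup>* hinit s" unfolding reachable_def .
  then have "reclamation_invariant s \<and> \<not> uaf s"
  proof (induction rule: rtranclp_induct)
    case base
    show ?case using reclamation_invariant_init by (simp add: hinit_def)
  next
    case (step s s')
    then have "refs_protected s" by (simp add: reclamation_invariant_def)
    with step show ?case using reclamation_invariant_step uaf_step by blast
  qed
  then show ?thesis ..
qed

end
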